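(* Let $A_4$ be the alternating group of degree 4. The following d-identities form a basis of d-identities of $A_4$ (i.e. they all hold in $A_4$, and every group satisfying all of them is isomorphic to a section of $A_4$): (1) $\omega_{12}=\bigvee_{0\le i<j\le 12}(x_i=x_j)$; (2) $(x^2=1)\vee(x^3=1)$; (3) $(x_1^3=1)\vee(x_2^3=1)\vee((x_1x_2)^2=1)$; (4) $\bigvee_{(k_1,k_2,k_3)}\big(x_1^{3k_1}x_2^{3k_2}x_3^{3k_3}=1\big)$, the disjunction running over all nonzero vectors $(k_1,k_2,k_3)\in\{0,1\}^3$; (5) $(x_1^4=1)\vee(x_2^4=1)\vee((x_1x_2)^4=1)\vee((x_1x_2^2)^4=1)$.
   Context: A d-identity (disjunctive identity) is a universally quantified formula $\forall x_1\dots x_k\,[(f_1=1)\vee\dots\vee(f_n=1)]$ with the $f_i$ words in the free group on the variables; $u=v$ abbreviates $uv^{-1}=1$. A group satisfies it if it is true for all assignments. For a group $G$, $\mathrm{dvar}(G)$ is the class of groups satisfying every d-identity satisfied by $G$; for finite $G$ it is the class of groups isomorphic to sections (quotients of subgroups) of $G$. A set of d-identities is a basis of d-identities of $G$ if all its members hold in $G$ and every group satisfying them lies in $\mathrm{dvar}(G)$. *)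

theory Defs
  imports "HOL-Algebra.Algebra"
begin

definition did1 :: "('a, 'b) monoid_scheme \<Rightarrow> bool" where
  "did1 G \<longleftrightarrow> (\<forall>x :: nat \<Rightarrow> 'a. (\<forall>i\<le>12. x i \<in> carrier G) \<longrightarrow>
      (\<exists>i j. i < j \<and> j \<le> 12 \<and> x i = x j))"

definition did2 :: "('a, 'b) monoid_scheme \<Rightarrow> bool" where
  "did2 G \<longleftrightarrow> (\<forall>x\<in>carrier G. x [^]\<^bsub>G\<^esub> (2::nat) = \<one>\<^bsub>G\<^esub> \<or> x [^]\<^bsub>G\<^esub> (3::nat) = \<one>\<^bsub>G\<^esub>)"

definition did3 :: "('a, 'b) monoid_scheme \<Rightarrow> bool" where
  "did3 G \<longleftrightarrow> (\<forall>x1\<in>carrier G. \<forall>x2\<in>carrier G.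
      x1 [^]\<^bsub>G\<^esub> (3::nat) = \<one>\<^bsub>G\<^esub> \<or> x2 [^]\<^bsub>G\<^esub> (3::nat) = \<one>\<^bsub>G\<^esub> \<or>
      (x1 \<otimes>\<^bsub>G\<^esub> x2) [^]\<^bsub>G\<^esub> (2::nat) = \<one>\<^bsub>G\<^esub>)"

definition did4 :: "('a, 'b) monoid_scheme \<Rightarrow> bool" where
  "did4 G \<longleftrightarrow> (\<forall>x1\<in>carrier G. \<forall>x2\<in>carrier G. \<forall>x3\<in>carrier G.
      \<exists>k1\<in>{0::nat,1}. \<exists>k2\<in>{0::nat,1}. \<exists>k3\<in>{0::nat,1}. (k1, k2, k3) \<noteq> (0, 0, 0) \<and>
        x1 [^]\<^bsub>G\<^esub> (3 * k1) \<otimes>\<^bsub>G\<^esub> x2 [^]\<^bsub>G\<^esub> (3 * k2) \<otimes>\<^bsub>G\<^esub> x3 [^]\<^bsub>G\<^esub> (3 * k3)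
          = \<one>\<^bsub>G\<^esub>)"

definition did5 :: "('a, 'b) monoid_scheme \<Rightarrow> bool" where
  "did5 G \<longleftrightarrow> (\<forall>x1\<in>carrier G. \<forall>x2\<in>carrier G.
      x1 [^]\<^bsub>G\<^esub> (4::nat) = \<one>\<^bsub>G\<^esub> \<or> x2 [^]\<^bsub>G\<^esub> (4::nat) = \<one>\<^bsub>G\<^esub> \<or>
      (x1 \<otimes>\<^bsub>G\<^esub> x2) [^]\<^bsub>G\<^esub> (4::nat) = \<one>\<^bsub>G\<^esub> \<or>
      (x1 \<otimes>\<^bsub>G\<^esub> (x2 \<otimes>\<^bsub>G\<^esub> x2)) [^]\<^bsub>G\<^esub> (4::nat) = \<one>\<^bsub>G\<^esub>)"

definition satisfies_A4_basis :: "('a, 'b) monoid_scheme \<Rightarrow> bool" where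
  "satisfies_A4_basis G \<longleftrightarrow> did1 G \<and> did2 G \<and> did3 G \<and> did4 G \<and> did5 G"

definition iso_to_section_of :: "('a, 'b) monoid_scheme \<Rightarrow> ('c, 'd) monoid_scheme \<Rightarrow> bool" where
  "iso_to_section_of G A \<longleftrightarrow> (\<exists>H N. subgroup H A \<and> N \<lhd> (subgroup_generated A H) \<and>
      G \<cong> (subgroup_generated A H Mod N))"

end

theory Submission
  imports Defs
begin

text \<open>
  By (2) every element of \<open>G\<close> is an involution or has order 3, and by (3) involutions commute.
  Identity (4), applied to involutions, makes any three of them dependent, so together with \<open>\<one>\<close>
  they form a Klein group \<open>V = {\<one>, a, b, ab}\<close>. If \<open>G\<close> has an involution \<open>a\<close> and an element \<open>c\<close> of
  order 3, these do not commute (else \<open>ca\<close> would have order 6), so \<open>b = cac\<^sup>-\<^sup>1\<close> and \<open>cbc\<^sup>-\<^sup>1\<close> are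
  the other two involutions of \<open>V\<close>; these are the defining relations of \<open>A\<^sub>4 = V \<rtimes> C\<^sub>3\<close>.
  By (5), for \<open>g\<close> of order 3 one of \<open>cg\<close>, \<open>cg\<^sup>2\<close> is an involution, so \<open>a, b, c\<close> generate \<open>G\<close>.
  Every element is then a normal word \<open>a\<^sup>i b\<^sup>j c\<^sup>k\<close>, multiplied by the same rule as in \<open>A\<^sub>4\<close>, so \<open>G\<close>
  is a quotient of \<open>A\<^sub>4\<close>. Without elements of order 3 or without involutions, \<open>G\<close> is a quotient of
  \<open>V\<close> or of \<open>C\<^sub>3\<close>.
\<close>

lemma iso_to_section_of_hom_onto:
  assumes G: "group G" and A: "group A" and H: "subgroup H A"
    and h: "h \<in> hom (subgroup_generated A H) G" and onto: "h ` H = carrier G"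
  shows "iso_to_section_of G A"
proof -
  let ?S = "subgroup_generated A H"
  have "group_hom ?S G h"
    using A G h by (simp add: group_hom_def group_hom_axioms_def group.group_subgroup_generated)
  moreover have "h ` carrier ?S = carrier G"
    using onto subgroup.carrier_subgroup_generated_subgroup[OF H] by simp
  ultimately have normal: "kernel ?S G h \<lhd> ?S" and "?S Mod kernel ?S G h \<cong> G"
    by (simp_all add: group_hom.normal_kernel group_hom.FactGroup_iso)
  then have "G \<cong> ?S Mod kernel ?S G h"
    by (simp add: group.iso_sym normal.factorgroup_is_group)
  with H normal show ?thesis
    unfolding iso_to_section_of_def by blast
qed

lemma iso_to_section_of_via_coordinates:
  assumes G: "group G" and A: "group A" and H: "subgroup H A"
    and closed: "\<And>x y. x \<in> I \<Longrightarrow> y \<in> I \<Longrightarrow> m x y \<in> I"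
    and f_inj: "inj_on f I" and f_onto: "f ` I = H"
    and f_mult: "\<And>x y. x \<in> I \<Longrightarrow> y \<in> I \<Longrightarrow> f (m x y) = f x \<otimes>\<^bsub>A\<^esub> f y"
    and g_mult: "\<And>x y. x \<in> I \<Longrightarrow> y \<in> I \<Longrightarrow> g (m x y) = g x \<otimes>\<^bsub>G\<^esub> g y"
    and g_onto: "g ` I = carrier G"
  shows "iso_to_section_of G A"
proof (rule iso_to_section_of_hom_onto[OF G A H])
  define h where "h = g \<circ> inv_into I f"
  have h_f: "h (f x) = g x" if "x \<in> I" for x
    using f_inj that by (simp add: h_def)
  have H_eq: "carrier (subgroup_generated A H) = f ` I"
    using subgroup.carrier_subgroup_generated_subgroup[OF H] f_onto by simp
  show "h ` H = carrier G"
    using g_onto h_f by (auto simp flip: f_onto simp: image_image cong: image_cong)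
  show "h \<in> hom (subgroup_generated A H) G"
  proof (rule homI)
    fix s assume "s \<in> carrier (subgroup_generated A H)"
    then show "h s \<in> carrier G"
      using H_eq g_onto h_f by auto
  next
    fix s t assume "s \<in> carrier (subgroup_generated A H)" "t \<in> carrier (subgroup_generated A H)"
    then obtain x y where "x \<in> I" "y \<in> I" "s = f x" "t = f y"
      using H_eq by auto
    then show "h (s \<otimes>\<^bsub>subgroup_generated A H\<^esub> t) = h s \<otimes>\<^bsub>G\<^esub> h t"
      by (simp add: closed h_f g_mult flip: f_mult)
  qed
qed

lemma nat_pow_numerals:
  "x [^]\<^bsub>G\<^esub> (1::nat) = \<one>\<^bsub>G\<^esub> \<otimes>\<^bsub>G\<^esub> x"
  "x [^]\<^bsub>G\<^esub> (2::nat) = \<one>\<^bsub>G\<^esub> \<otimes>\<^bsub>G\<^esub> x \<otimes>\<^bsub>G\<^esub> x"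
  "x [^]\<^bsub>G\<^esub> (3::nat) = \<one>\<^bsub>G\<^esub> \<otimes>\<^bsub>G\<^esub> x \<otimes>\<^bsub>G\<^esub> x \<otimes>\<^bsub>G\<^esub> x"
  "x [^]\<^bsub>G\<^esub> (4::nat) = \<one>\<^bsub>G\<^esub> \<otimes>\<^bsub>G\<^esub> x \<otimes>\<^bsub>G\<^esub> x \<otimes>\<^bsub>G\<^esub> x \<otimes>\<^bsub>G\<^esub> x"
  by (simp_all add: numeral_eq_Suc)

lemma (in monoid) nat_pow_mod_eq:
  assumes "x \<in> carrier G" "x [^] (m::nat) = \<one>"
  shows "x [^] (n::nat) = x [^] (n mod m)"
proof -
  have "x [^] n = (x [^] m) [^] (n div m) \<otimes> x [^] (n mod m)"
    using assms(1) by (simp add: nat_pow_pow nat_pow_mult)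
  then show ?thesis
    using assms by simp
qed

lemma (in monoid) nat_pow_twisted_commute:
  assumes "x \<in> carrier G" "y \<in> carrier G" "z \<in> carrier G" "x \<otimes> y = z \<otimes> x"
  shows "x \<otimes> y [^] (n::nat) = z [^] n \<otimes> x"
proof (induction n)
  case (Suc n)
  have "x \<otimes> y [^] Suc n = (x \<otimes> y [^] n) \<otimes> y"
    using assms by (simp add: m_assoc)
  also have "\<dots> = z [^] n \<otimes> (x \<otimes> y)"
    using Suc assms by (simp add: m_assoc)
  also have "\<dots> = z [^] Suc n \<otimes> x"
    using assms by (simp add: m_assoc)
  finally show ?case .
qed (use assms in simp)

lemma (in group) involution_cancel:
  "x \<in> carrier G \<Longrightarrow> x \<otimes> x = \<one> \<Longrightarrow> z \<in> carrier G \<Longrightarrow> x \<otimes> (x \<otimes> z) = z"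
  by (simp flip: m_assoc)

lemma (in group) order_three_cancel:
  "c \<in> carrier G \<Longrightarrow> c \<otimes> (c \<otimes> c) = \<one> \<Longrightarrow> z \<in> carrier G \<Longrightarrow> c \<otimes> (c \<otimes> (c \<otimes> z)) = z"
  by (simp flip: m_assoc)

lemma (in group) involution_mult_eq_one_iff:
  "x \<in> carrier G \<Longrightarrow> y \<in> carrier G \<Longrightarrow> x \<otimes> x = \<one> \<Longrightarrow> x \<otimes> y = \<one> \<longleftrightarrow> y = x"
  by (metis l_cancel)

lemma (in group) generate_subset_mult_closed:
  assumes "\<one> \<in> W" "S \<subseteq> W" "m_inv G ` S \<subseteq> W" "\<And>x y. x \<in> W \<Longrightarrow> y \<in> W \<Longrightarrow> x \<otimes> y \<in> W"
  shows "generate G S \<subseteq> W"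
proof
  fix x assume "x \<in> generate G S"
  then show "x \<in> W"
    by induction (use assms in auto)
qed

section \<open>Normal words\<close>

text \<open>
  Multiplication of \<open>V \<rtimes> C\<^sub>3\<close> in the coordinates \<open>(i, j, k)\<close> of \<open>a\<^sup>i b\<^sup>j c\<^sup>k\<close>: conjugation by \<open>c\<close>
  sends \<open>a\<^sup>i b\<^sup>j\<close> to \<open>a\<^sup>j b\<^sup>i\<^sup>+\<^sup>j\<close>, and exponents are reduced modulo 2 and 3 only at the end.
\<close>

definition conj_exponents :: "nat \<times> nat \<Rightarrow> nat \<times> nat" where
  "conj_exponents = (\<lambda>(i, j). (j, i + j))"

definition coord_mult :: "nat \<times> nat \<times> nat \<Rightarrow> nat \<times> nat \<times> nat \<Rightarrow> nat \<times> nat \<times> nat" where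
  "coord_mult = (\<lambda>(i, j, k) (i', j', k'). case (conj_exponents ^^ k) (i', j') of
     (p, q) \<Rightarrow> ((i + p) mod 2, (j + q) mod 2, (k + k') mod 3))"

definition A4_coords :: "(nat \<times> nat \<times> nat) set" where
  "A4_coords = {0, 1} \<times> {0, 1} \<times> {0, 1, 2}"

definition klein_coords :: "(nat \<times> nat \<times> nat) set" where
  "klein_coords = {0, 1} \<times> {0, 1} \<times> {0}"

lemma coord_mult_closed: "coord_mult x y \<in> A4_coords"
proof -
  have "(i mod 2, j mod 2, k mod 3) \<in> A4_coords" for i j k :: nat
    unfolding A4_coords_def mem_Sigma_iff insert_iff empty_iff by presburger
  then show ?thesis
    unfolding coord_mult_def by (simp only: case_prod_unfold)
qed

lemma coord_mult_klein_closed: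
  assumes "x \<in> klein_coords" "y \<in> klein_coords"
  shows "coord_mult x y \<in> klein_coords"
proof -
  obtain i j i' j' where "x = (i, j, 0)" "y = (i', j', 0)"
    using assms unfolding klein_coords_def by blast
  then show ?thesis
    unfolding klein_coords_def mem_Sigma_iff insert_iff empty_iff by (simp add: coord_mult_def) presburger
qed

lemma klein_coords_subset: "klein_coords \<subseteq> A4_coords"
  by (auto simp: klein_coords_def A4_coords_def)

definition (in monoid) normal_word :: "'a \<Rightarrow> 'a \<Rightarrow> 'a \<Rightarrow> nat \<times> nat \<times> nat \<Rightarrow> 'a" where
  "normal_word a b c = (\<lambda>(i, j, k). a [^] i \<otimes> (b [^] j \<otimes> c [^] k))"

definition (in monoid) klein_relations :: "'a \<Rightarrow> 'a \<Rightarrow> bool" where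
  "klein_relations a b \<longleftrightarrow> a \<otimes> a = \<one> \<and> b \<otimes> b = \<one> \<and> b \<otimes> a = a \<otimes> b"

definition (in monoid) A4_relations :: "'a \<Rightarrow> 'a \<Rightarrow> 'a \<Rightarrow> bool" where
  "A4_relations a b c \<longleftrightarrow> klein_relations a b \<and>
     c \<otimes> (c \<otimes> c) = \<one> \<and> c \<otimes> a = b \<otimes> c \<and> c \<otimes> b = a \<otimes> (b \<otimes> c)"

lemma (in monoid) normal_word_closed:
  "a \<in> carrier G \<Longrightarrow> b \<in> carrier G \<Longrightarrow> c \<in> carrier G \<Longrightarrow> normal_word a b c x \<in> carrier G"
  by (cases x) (simp add: normal_word_def)

lemma (in group) klein_word_mult:
  fixes i j i' j' :: nat
  assumes a: "a \<in> carrier G" and b: "b \<in> carrier G" and "klein_relations a b"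
  shows "a [^] i \<otimes> b [^] j \<otimes> (a [^] i' \<otimes> b [^] j') = a [^] ((i + i') mod 2) \<otimes> b [^] ((j + j') mod 2)"
proof -
  have a2: "a [^] (2::nat) = \<one>" and b2: "b [^] (2::nat) = \<one>" and ab: "a \<otimes> b = b \<otimes> a"
    using assms by (simp_all add: klein_relations_def nat_pow_numerals)
  have "b \<otimes> a [^] i' = a [^] i' \<otimes> b"
    using group_commutes_pow[OF ab a b] by simp
  then have comm: "b [^] j \<otimes> (a [^] i' \<otimes> z) = a [^] i' \<otimes> (b [^] j \<otimes> z)" if "z \<in> carrier G" for z
    using group_commutes_pow[of b "a [^] i'" j] a b that by (simp flip: m_assoc)
  have "a [^] i \<otimes> b [^] j \<otimes> (a [^] i' \<otimes> b [^] j') = a [^] i \<otimes> a [^] i' \<otimes> (b [^] j \<otimes> b [^] j')"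
    using a b by (simp add: m_assoc comm)
  also have "\<dots> = a [^] (i + i') \<otimes> b [^] (j + j')"
    using a b by (simp add: nat_pow_mult)
  also have "\<dots> = a [^] ((i + i') mod 2) \<otimes> b [^] ((j + j') mod 2)"
    using nat_pow_mod_eq[OF a a2, of "i + i'"] nat_pow_mod_eq[OF b b2, of "j + j'"] by simp
  finally show ?thesis .
qed

lemma (in group) klein_word_conj:
  fixes i j :: nat
  assumes a: "a \<in> carrier G" and b: "b \<in> carrier G" and c: "c \<in> carrier G" and "A4_relations a b c"
  shows "c \<otimes> (a [^] i \<otimes> b [^] j) = a [^] j \<otimes> (b [^] (i + j) \<otimes> c)"
proof -
  have ab: "a \<otimes> b = b \<otimes> a" and ca: "c \<otimes> a = b \<otimes> c" and cb: "c \<otimes> b = (a \<otimes> b) \<otimes> c"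
    using assms by (simp_all add: A4_relations_def klein_relations_def m_assoc)
  have "b \<otimes> a [^] j = a [^] j \<otimes> b"
    using group_commutes_pow[OF ab a b] by simp
  then have comm: "b [^] i \<otimes> (a [^] j \<otimes> z) = a [^] j \<otimes> (b [^] i \<otimes> z)" if "z \<in> carrier G" for z
    using group_commutes_pow[of b "a [^] j" i] a b that by (simp flip: m_assoc)
  have "c \<otimes> (a [^] i \<otimes> b [^] j) = b [^] i \<otimes> (c \<otimes> b [^] j)"
    using a b c nat_pow_twisted_commute[OF c a b ca] by (simp flip: m_assoc)
  also have "\<dots> = b [^] i \<otimes> (a [^] j \<otimes> b [^] j \<otimes> c)"
    using a b c nat_pow_twisted_commute[OF c b _ cb] pow_mult_distrib[OF ab a b] by simp
  also have "\<dots> = a [^] j \<otimes> (b [^] i \<otimes> b [^] j \<otimes> c)"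
    using a b c by (simp add: m_assoc comm)
  also have "\<dots> = a [^] j \<otimes> (b [^] (i + j) \<otimes> c)"
    using b by (simp add: nat_pow_mult)
  finally show ?thesis .
qed

lemma (in group) klein_word_conj_pow:
  fixes i j k :: nat
  assumes a: "a \<in> carrier G" and b: "b \<in> carrier G" and c: "c \<in> carrier G" and rel: "A4_relations a b c"
  shows "c [^] k \<otimes> (a [^] i \<otimes> b [^] j) =
    (case (conj_exponents ^^ k) (i, j) of (p, q) \<Rightarrow> a [^] p \<otimes> b [^] q) \<otimes> c [^] k"
proof (induction k arbitrary: i j)
  case (Suc k)
  obtain p q where pq: "(conj_exponents ^^ k) (j, i + j) = (p, q)"
    by fastforce
  have shift: "(conj_exponents ^^ Suc k) (i, j) = (conj_exponents ^^ k) (j, i + j)"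
    by (simp add: funpow_Suc_right conj_exponents_def del: funpow.simps)
  have "c [^] Suc k \<otimes> (a [^] i \<otimes> b [^] j) = (c [^] k \<otimes> (a [^] j \<otimes> b [^] (i + j))) \<otimes> c"
    using a b c klein_word_conj[OF assms, of i j] by (simp add: m_assoc)
  also have "\<dots> = (a [^] p \<otimes> b [^] q \<otimes> c [^] k) \<otimes> c"
    using Suc[of j "i + j"] pq by simp
  also have "\<dots> = (case (conj_exponents ^^ Suc k) (i, j) of (p, q) \<Rightarrow> a [^] p \<otimes> b [^] q) \<otimes> c [^] Suc k"
    using a b c pq unfolding shift by (simp add: m_assoc)
  finally show ?case .
qed (use a b c in simp)

lemma (in group) normal_word_mult:
  assumes a: "a \<in> carrier G" and b: "b \<in> carrier G" and c: "c \<in> carrier G" and rel: "A4_relations a b c"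
  shows "normal_word a b c (coord_mult x y) = normal_word a b c x \<otimes> normal_word a b c y"
proof -
  obtain i j k i' j' k' where xy: "x = (i, j, k)" "y = (i', j', k')"
    using prod_cases3 by metis
  obtain p q where pq: "(conj_exponents ^^ k) (i', j') = (p, q)"
    by fastforce
  have "c [^] (3::nat) = \<one>"
    using rel by (simp add: A4_relations_def nat_pow_numerals m_assoc c)
  have "normal_word a b c x \<otimes> normal_word a b c y
      = a [^] i \<otimes> b [^] j \<otimes> (c [^] k \<otimes> (a [^] i' \<otimes> b [^] j')) \<otimes> c [^] k'"
    using a b c by (simp add: xy normal_word_def m_assoc)
  also have "\<dots> = a [^] i \<otimes> b [^] j \<otimes> (a [^] p \<otimes> b [^] q) \<otimes> c [^] (k + k')"
    using a b c klein_word_conj_pow[OF assms] pq by (simp add: m_assoc nat_pow_mult)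
  also have "\<dots> = a [^] ((i + p) mod 2) \<otimes> b [^] ((j + q) mod 2) \<otimes> c [^] ((k + k') mod 3)"
    using klein_word_mult[OF a b] rel nat_pow_mod_eq[OF c \<open>c [^] (3::nat) = \<one>\<close>, of "k + k'"]
    by (simp add: A4_relations_def)
  also have "\<dots> = normal_word a b c (coord_mult x y)"
    using a b c by (simp add: xy pq normal_word_def coord_mult_def m_assoc)
  finally show ?thesis ..
qed

lemma (in group) normal_word_mult_klein:
  assumes a: "a \<in> carrier G" and b: "b \<in> carrier G" and rel: "klein_relations a b"
    and "x \<in> klein_coords" "y \<in> klein_coords"
  shows "normal_word a b c (coord_mult x y) = normal_word a b c x \<otimes> normal_word a b c y"
proof -
  obtain i j i' j' where xy: "x = (i, j, 0)" "y = (i', j', 0)"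
    using assms(4,5) unfolding klein_coords_def by blast
  have "normal_word a b c x \<otimes> normal_word a b c y = a [^] i \<otimes> b [^] j \<otimes> (a [^] i' \<otimes> b [^] j')"
    using a b by (simp add: xy normal_word_def)
  also have "\<dots> = normal_word a b c (coord_mult x y)"
    using a b by (simp add: klein_word_mult[OF a b rel] xy normal_word_def coord_mult_def)
  finally show ?thesis ..
qed

lemma (in group) generate_subset_normal_word_image:
  assumes a: "a \<in> carrier G" and b: "b \<in> carrier G" and c: "c \<in> carrier G" and rel: "A4_relations a b c"
  shows "generate G {a, b, c} \<subseteq> normal_word a b c ` A4_coords"
proof (rule generate_subset_mult_closed)
  have "normal_word a b c ` {(0, 0, 0), (1, 0, 0), (0, 1, 0), (0, 0, 1), (0, 0, 2)}
      \<subseteq> normal_word a b c ` A4_coords"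
    by (intro image_mono) (simp add: A4_coords_def)
  then have words: "{\<one>, a, b, c, c \<otimes> c} \<subseteq> normal_word a b c ` A4_coords"
    using a b c by (simp add: normal_word_def nat_pow_numerals)
  have "a \<otimes> a = \<one>" "b \<otimes> b = \<one>" "c \<otimes> c \<otimes> c = \<one>"
    using rel c by (simp_all add: A4_relations_def klein_relations_def m_assoc)
  then have "inv a = a" "inv b = b" "inv c = c \<otimes> c"
    using a b c by (simp_all add: inv_equality)
  with words show "\<one> \<in> normal_word a b c ` A4_coords" "{a, b, c} \<subseteq> normal_word a b c ` A4_coords"
    "m_inv G ` {a, b, c} \<subseteq> normal_word a b c ` A4_coords"
    by auto
next
  fix x y assume "x \<in> normal_word a b c ` A4_coords" "y \<in> normal_word a b c ` A4_coords"
  then obtain u v where "x = normal_word a b c u" "y = normal_word a b c v"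
    by blast
  then have "x \<otimes> y = normal_word a b c (coord_mult u v)"
    by (simp add: normal_word_mult[OF a b c rel])
  with coord_mult_closed show "x \<otimes> y \<in> normal_word a b c ` A4_coords"
    by blast
qed

lemma (in group) generate_subset_normal_word_image_klein:
  assumes a: "a \<in> carrier G" and b: "b \<in> carrier G" and rel: "klein_relations a b"
  shows "generate G {a, b} \<subseteq> normal_word a b \<one> ` klein_coords"
proof (rule generate_subset_mult_closed)
  have "normal_word a b \<one> ` {(0, 0, 0), (1, 0, 0), (0, 1, 0)} \<subseteq> normal_word a b \<one> ` klein_coords"
    by (intro image_mono) (simp add: klein_coords_def)
  then have words: "{\<one>, a, b} \<subseteq> normal_word a b \<one> ` klein_coords"
    using a b by (simp add: normal_word_def nat_pow_numerals)
  have "inv a = a" "inv b = b"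
    using a b rel by (simp_all add: klein_relations_def inv_equality)
  with words show "\<one> \<in> normal_word a b \<one> ` klein_coords" "{a, b} \<subseteq> normal_word a b \<one> ` klein_coords"
    "m_inv G ` {a, b} \<subseteq> normal_word a b \<one> ` klein_coords"
    by auto
next
  fix x y assume "x \<in> normal_word a b \<one> ` klein_coords" "y \<in> normal_word a b \<one> ` klein_coords"
  then obtain u v where uv: "u \<in> klein_coords" "v \<in> klein_coords"
    and "x = normal_word a b \<one> u" "y = normal_word a b \<one> v"
    by blast
  then have "x \<otimes> y = normal_word a b \<one> (coord_mult u v)"
    by (simp add: normal_word_mult_klein[OF a b rel])
  with coord_mult_klein_closed[OF uv] show "x \<otimes> y \<in> normal_word a b \<one> ` klein_coords"
    by blast
qed

section \<open>The alternating group \<open>A\<^sub>4\<close>\<close>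

text \<open>Permutations of \<open>{1..4}\<close> in one-line notation, in which \<open>simp\<close> evaluates products in \<open>A\<^sub>4\<close>.\<close>

definition perm4 :: "nat \<Rightarrow> nat \<Rightarrow> nat \<Rightarrow> nat \<Rightarrow> nat \<Rightarrow> nat" where
  "perm4 p1 p2 p3 p4 =
     (\<lambda>x. if x = 1 then p1 else if x = 2 then p2 else if x = 3 then p3 else if x = 4 then p4 else x)"

lemma perm4_apply [simp]:
  "perm4 p1 p2 p3 p4 1 = p1" "perm4 p1 p2 p3 p4 (Suc 0) = p1"
  "perm4 p1 p2 p3 p4 2 = p2" "perm4 p1 p2 p3 p4 3 = p3" "perm4 p1 p2 p3 p4 4 = p4"
  by (simp_all add: perm4_def)

lemma perm4_comp [simp]:
  "perm4 p1 p2 p3 p4 \<circ> perm4 q1 q2 q3 q4 =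
     perm4 (perm4 p1 p2 p3 p4 q1) (perm4 p1 p2 p3 p4 q2) (perm4 p1 p2 p3 p4 q3) (perm4 p1 p2 p3 p4 q4)"
  by (rule ext) (simp add: perm4_def)

lemma perm4_eq_iff [simp]:
  "perm4 p1 p2 p3 p4 = perm4 q1 q2 q3 q4 \<longleftrightarrow> p1 = q1 \<and> p2 = q2 \<and> p3 = q3 \<and> p4 = q4"
  by (metis perm4_apply(1,3-5))

lemma id_eq_perm4: "id = perm4 1 2 3 4"
  by (simp add: perm4_def fun_eq_iff)

abbreviation A4 :: "(nat \<Rightarrow> nat) monoid" where
  "A4 \<equiv> alt_group 4"

lemma monoid_A4: "monoid A4"
  by (simp add: group.is_monoid alt_group_is_group)

abbreviation A4_a :: "nat \<Rightarrow> nat" where "A4_a \<equiv> perm4 2 1 4 3"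
abbreviation A4_b :: "nat \<Rightarrow> nat" where "A4_b \<equiv> perm4 4 3 2 1"
abbreviation A4_c :: "nat \<Rightarrow> nat" where "A4_c \<equiv> perm4 2 3 1 4"
abbreviation A4_word :: "nat \<times> nat \<times> nat \<Rightarrow> nat \<Rightarrow> nat" where
  "A4_word \<equiv> monoid.normal_word A4 A4_a A4_b A4_c"

lemma transpose_comp_transpose_in_alt_group:
  assumes "a \<in> {1..n}" "b \<in> {1..n}" "c \<in> {1..n}" "d \<in> {1..n}" "a \<noteq> b" "c \<noteq> d"
  shows "transpose a b \<circ> transpose c d \<in> carrier (alt_group n)"
  using assms unfolding alt_group_carrier
  by (simp add: permutes_compose permutes_swap_id evenperm_comp permutation_swap_id evenperm_swap)

lemma A4_generators_in_carrier: "A4_a \<in> carrier A4" "A4_b \<in> carrier A4" "A4_c \<in> carrier A4"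
proof -
  have "A4_a = transpose 1 2 \<circ> transpose 3 4" "A4_b = transpose 1 4 \<circ> transpose 2 3"
    "A4_c = transpose 1 2 \<circ> transpose 2 3"
    by (auto simp: perm4_def fun_eq_iff transpose_def)
  then show "A4_a \<in> carrier A4" "A4_b \<in> carrier A4" "A4_c \<in> carrier A4"
    by (simp_all add: transpose_comp_transpose_in_alt_group)
qed

lemma A4_relations_generators: "monoid.A4_relations A4 A4_a A4_b A4_c"
  by (simp add: monoid_A4 monoid.A4_relations_def monoid.klein_relations_def alt_group_mult alt_group_one
      id_eq_perm4)

lemma A4_word_image:
  "A4_word ` A4_coords =
     {perm4 1 2 3 4, perm4 2 3 1 4, perm4 3 1 2 4, perm4 4 3 2 1, perm4 3 2 4 1, perm4 2 4 3 1,
      perm4 2 1 4 3, perm4 1 4 2 3, perm4 4 2 1 3, perm4 3 4 1 2, perm4 4 1 3 2, perm4 1 3 4 2}"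
  by (simp add: A4_coords_def monoid_A4 monoid.normal_word_def nat_pow_numerals alt_group_mult alt_group_one id_eq_perm4)

lemma A4_word_inj: "inj_on A4_word A4_coords"
proof (rule eq_card_imp_inj_on)
  show "finite A4_coords" by (simp add: A4_coords_def)
  show "card (A4_word ` A4_coords) = card A4_coords"
    unfolding A4_word_image by (simp add: A4_coords_def)
qed

lemma carrier_A4:
  "carrier A4 =
     {perm4 1 2 3 4, perm4 2 3 1 4, perm4 3 1 2 4, perm4 4 3 2 1, perm4 3 2 4 1, perm4 2 4 3 1,
      perm4 2 1 4 3, perm4 1 4 2 3, perm4 4 2 1 3, perm4 3 4 1 2, perm4 4 1 3 2, perm4 1 3 4 2}"
proof -
  have card: "card (carrier A4) = 12"
    using alt_group_card_carrier[of 4] by (simp add: fact_numeral)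
  have "A4_word ` A4_coords \<subseteq> carrier A4"
    using A4_generators_in_carrier
    by (auto simp: A4_coords_def monoid_A4 monoid.normal_word_def monoid.nat_pow_closed monoid.m_closed)
  moreover have "card (A4_word ` A4_coords) = 12"
    unfolding A4_word_image by simp
  ultimately show ?thesis
    using card card_subset_eq[of "carrier A4" "A4_word ` A4_coords"] A4_word_image
    by (metis card_ge_0_finite zero_less_numeral)
qed

definition klein_four :: "(nat \<Rightarrow> nat) set" where
  "klein_four = {perm4 1 2 3 4, perm4 2 1 4 3, perm4 4 3 2 1, perm4 3 4 1 2}"

lemma A4_word_klein_image: "A4_word ` klein_coords = klein_four"
  by (simp add: klein_coords_def klein_four_def monoid_A4 monoid.normal_word_def nat_pow_numerals
      alt_group_mult alt_group_one id_eq_perm4 insert_commute)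

lemma klein_four_subgroup: "subgroup klein_four A4"
proof (rule group.subgroupI[OF alt_group_is_group])
  show "klein_four \<subseteq> carrier A4" "klein_four \<noteq> {}"
    by (auto simp: klein_four_def carrier_A4)
next
  fix x assume x: "x \<in> klein_four"
  then have "x \<otimes>\<^bsub>A4\<^esub> x = \<one>\<^bsub>A4\<^esub>" "x \<in> carrier A4"
    by (auto simp: klein_four_def carrier_A4 alt_group_mult alt_group_one id_eq_perm4)
  then have "inv\<^bsub>A4\<^esub> x = x"
    by (simp add: group.inv_equality[OF alt_group_is_group])
  with x show "inv\<^bsub>A4\<^esub> x \<in> klein_four"
    by simp
next
  fix x y assume "x \<in> klein_four" "y \<in> klein_four"
  then show "x \<otimes>\<^bsub>A4\<^esub> y \<in> klein_four"
    by (auto simp: klein_four_def alt_group_mult)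
qed

lemma iso_to_section_of_A4_if_A4_relations:
  assumes G: "group G" and abc: "a \<in> carrier G" "b \<in> carrier G" "c \<in> carrier G"
    and rel: "monoid.A4_relations G a b c" and gen: "carrier G \<subseteq> generate G {a, b, c}"
  shows "iso_to_section_of G A4"
proof (rule iso_to_section_of_via_coordinates
    [OF G alt_group_is_group group.subgroup_self[OF alt_group_is_group] coord_mult_closed A4_word_inj])
  show "A4_word ` A4_coords = carrier A4"
    by (simp only: A4_word_image carrier_A4)
  show "A4_word (coord_mult x y) = A4_word x \<otimes>\<^bsub>A4\<^esub> A4_word y" for x y
    by (rule group.normal_word_mult[OF alt_group_is_group A4_generators_in_carrier A4_relations_generators])
  show "monoid.normal_word G a b c (coord_mult x y) =
      monoid.normal_word G a b c x \<otimes>\<^bsub>G\<^esub> monoid.normal_word G a b c y" for x y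
    by (rule group.normal_word_mult[OF G abc rel])
  show "monoid.normal_word G a b c ` A4_coords = carrier G"
    using group.generate_subset_normal_word_image[OF G abc rel] gen
      monoid.normal_word_closed[OF group.is_monoid[OF G] abc] by blast
qed

lemma iso_to_section_of_A4_if_klein_relations:
  assumes G: "group G" and ab: "a \<in> carrier G" "b \<in> carrier G"
    and rel: "monoid.klein_relations G a b" and gen: "carrier G \<subseteq> generate G {a, b}"
  shows "iso_to_section_of G A4"
proof (rule iso_to_section_of_via_coordinates[OF G alt_group_is_group klein_four_subgroup coord_mult_klein_closed])
  show "inj_on A4_word klein_coords"
    using A4_word_inj klein_coords_subset by (rule inj_on_subset)
  show "A4_word ` klein_coords = klein_four"
    by (rule A4_word_klein_image)
  show "A4_word (coord_mult x y) = A4_word x \<otimes>\<^bsub>A4\<^esub> A4_word y" for x y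
    by (rule group.normal_word_mult[OF alt_group_is_group A4_generators_in_carrier A4_relations_generators])
  show "monoid.normal_word G a b \<one>\<^bsub>G\<^esub> (coord_mult x y) =
      monoid.normal_word G a b \<one>\<^bsub>G\<^esub> x \<otimes>\<^bsub>G\<^esub> monoid.normal_word G a b \<one>\<^bsub>G\<^esub> y"
    if "x \<in> klein_coords" "y \<in> klein_coords" for x y
    using group.normal_word_mult_klein[OF G ab rel that] .
  show "monoid.normal_word G a b \<one>\<^bsub>G\<^esub> ` klein_coords = carrier G"
    using group.generate_subset_normal_word_image_klein[OF G ab rel] gen
      monoid.normal_word_closed[OF group.is_monoid[OF G] ab monoid.one_closed[OF group.is_monoid[OF G]]]
    by blast
qed

section \<open>\<open>A\<^sub>4\<close> satisfies the d-identities\<close>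

lemma did1_if_card_le:
  assumes "finite (carrier G)" "card (carrier G) \<le> 12"
  shows "did1 G"
  unfolding did1_def
proof (intro allI impI)
  fix x :: "nat \<Rightarrow> 'a" assume x: "\<forall>i\<le>12. x i \<in> carrier G"
  have "\<not> inj_on x {..12}"
  proof
    assume "inj_on x {..12}"
    then have "card {..12::nat} \<le> card (carrier G)"
      using x assms(1) by (intro card_inj_on_le) auto
    with assms(2) show False
      by simp
  qed
  then show "\<exists>i j. i < j \<and> j \<le> 12 \<and> x i = x j"
    unfolding inj_on_def by (metis atMost_iff linorder_neqE_nat)
qed

lemma did1_A4: "did1 A4"
  by (rule did1_if_card_le) (simp_all add: carrier_A4)

lemma did2_A4: "did2 A4"
  unfolding did2_def carrier_A4 ball_simps
  by (simp add: nat_pow_numerals alt_group_mult alt_group_one id_eq_perm4)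

lemma did3_A4: "did3 A4"
  unfolding did3_def carrier_A4 ball_simps
  by (simp add: nat_pow_numerals alt_group_mult alt_group_one id_eq_perm4)

lemma did5_A4: "did5 A4"
  unfolding did5_def carrier_A4 ball_simps
  by (simp add: nat_pow_numerals alt_group_mult alt_group_one id_eq_perm4)

lemma A4_cube_in_klein_four: "x \<in> carrier A4 \<Longrightarrow> x [^]\<^bsub>A4\<^esub> (3::nat) \<in> klein_four"
  unfolding carrier_A4 klein_four_def
  by (auto simp: nat_pow_numerals alt_group_mult alt_group_one id_eq_perm4)

lemma klein_four_dependent:
  assumes "y1 \<in> klein_four" "y2 \<in> klein_four" "y3 \<in> klein_four"
  shows "y1 = id \<or> y2 = id \<or> y3 = id \<or> y1 \<circ> y2 = id \<or> y1 \<circ> y3 = id \<or> y2 \<circ> y3 = id \<or> y1 \<circ> y2 \<circ> y3 = id"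
  using assms unfolding klein_four_def by (auto simp: id_eq_perm4)

lemma did4_A4: "did4 A4"
  unfolding did4_def
proof (intro ballI)
  fix x1 x2 x3 assume x: "x1 \<in> carrier A4" "x2 \<in> carrier A4" "x3 \<in> carrier A4"
  have cube: "x [^]\<^bsub>A4\<^esub> (3 * k) = (x [^]\<^bsub>A4\<^esub> (3::nat)) [^]\<^bsub>A4\<^esub> k" if "x \<in> carrier A4" for x and k :: nat
    using that by (simp add: monoid_A4 monoid.nat_pow_pow)
  show "\<exists>k1\<in>{0::nat,1}. \<exists>k2\<in>{0::nat,1}. \<exists>k3\<in>{0::nat,1}. (k1, k2, k3) \<noteq> (0, 0, 0) \<and>
      x1 [^]\<^bsub>A4\<^esub> (3 * k1) \<otimes>\<^bsub>A4\<^esub> x2 [^]\<^bsub>A4\<^esub> (3 * k2) \<otimes>\<^bsub>A4\<^esub> x3 [^]\<^bsub>A4\<^esub> (3 * k3) = \<one>\<^bsub>A4\<^esub>"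
    unfolding cube[OF x(1)] cube[OF x(2)] cube[OF x(3)]
    using klein_four_dependent[OF A4_cube_in_klein_four[OF x(1)] A4_cube_in_klein_four[OF x(2)]
        A4_cube_in_klein_four[OF x(3)]]
    by (simp add: alt_group_mult alt_group_one) blast
qed

section \<open>Groups satisfying the d-identities\<close>

locale A4_basis_group = group +
  assumes did2: "did2 G" and did3: "did3 G" and did4: "did4 G" and did5: "did5 G"
begin

lemma order_two_or_three: "x \<in> carrier G \<Longrightarrow> x \<otimes> x = \<one> \<or> x \<otimes> (x \<otimes> x) = \<one>"
  using did2 unfolding did2_def by (simp add: nat_pow_numerals m_assoc)

lemma involution_mult_involution:
  assumes x: "x \<in> carrier G" "x \<otimes> x = \<one>" and y: "y \<in> carrier G" "y \<otimes> y = \<one>"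
  shows "(x \<otimes> y) \<otimes> (x \<otimes> y) = \<one>"
proof -
  from did3 x(1) y(1)
  consider "x [^] (3::nat) = \<one>" | "y [^] (3::nat) = \<one>" | "(x \<otimes> y) [^] (2::nat) = \<one>"
    unfolding did3_def by blast
  then show ?thesis
  proof cases
    case 1
    then have "x = \<one>"
      using x by (simp add: nat_pow_numerals)
    with y show ?thesis
      by simp
  next
    case 2
    then have "y = \<one>"
      using y by (simp add: nat_pow_numerals)
    with x show ?thesis
      by simp
  next
    case 3
    with x y show ?thesis
      by (simp add: nat_pow_numerals)
  qed
qed

lemma involutions_commute:
  assumes x: "x \<in> carrier G" "x \<otimes> x = \<one>" and y: "y \<in> carrier G" "y \<otimes> y = \<one>"
  shows "y \<otimes> x = x \<otimes> y"
proof -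
  have "inv (x \<otimes> y) = x \<otimes> y"
    using involution_mult_involution[OF x y] x y by (simp add: inv_equality)
  moreover have "inv x = x" "inv y = y"
    using x y by (simp_all add: inv_equality)
  ultimately show ?thesis
    using x y by (simp add: inv_mult_group)
qed

lemma pow4_eq_one_imp_involution:
  assumes x: "x \<in> carrier G" "x [^] (4::nat) = \<one>"
  shows "x \<otimes> x = \<one>"
proof (rule ccontr)
  assume "x \<otimes> x \<noteq> \<one>"
  then have "x \<otimes> (x \<otimes> x) = \<one>"
    using order_two_or_three x(1) by blast
  then have "x = \<one>"
    using x by (simp add: nat_pow_numerals m_assoc)
  with \<open>x \<otimes> x \<noteq> \<one>\<close> show False
    by simp
qed

lemma involution_in_klein:
  assumes a: "a \<in> carrier G" "a \<otimes> a = \<one>" "a \<noteq> \<one>" and b: "b \<in> carrier G" "b \<otimes> b = \<one>" "b \<noteq> \<one>"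
    and "a \<noteq> b" and z: "z \<in> carrier G" "z \<otimes> z = \<one>"
  shows "z \<in> {\<one>, a, b, a \<otimes> b}"
proof -
  have cube: "x [^] (3 * k) = (if k = 0 then \<one> else x)"
    if "x \<in> carrier G" "x \<otimes> x = \<one>" "k \<in> {0::nat, 1}" for x k
  proof -
    have "x [^] (3::nat) = x"
      using that by (simp add: nat_pow_numerals)
    with that show ?thesis
      by auto
  qed
  obtain k1 k2 k3 where k: "k1 \<in> {0::nat, 1}" "k2 \<in> {0::nat, 1}" "k3 \<in> {0::nat, 1}" "(k1, k2, k3) \<noteq> (0, 0, 0)"
    and "a [^] (3 * k1) \<otimes> b [^] (3 * k2) \<otimes> z [^] (3 * k3) = \<one>"
    using did4[unfolded did4_def, rule_format, OF a(1) b(1) z(1)] by meson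
  then have prod: "(if k1 = 0 then \<one> else a) \<otimes> (if k2 = 0 then \<one> else b) \<otimes> (if k3 = 0 then \<one> else z) = \<one>"
    by (simp only: cube[OF a(1,2) k(1)] cube[OF b(1,2) k(2)] cube[OF z k(3)])
  have ab: "(a \<otimes> b) \<otimes> (a \<otimes> b) = \<one>"
    using involution_mult_involution a b by blast
  note inv_iff = involution_mult_eq_one_iff[OF a(1) _ a(2)] involution_mult_eq_one_iff[OF b(1) _ b(2)]
    involution_mult_eq_one_iff[OF m_closed[OF a(1) b(1)] _ ab]
  from k consider "k3 = 0" "k1 = 1" | "k3 = 0" "k1 = 0" "k2 = 1" | "k3 = 1"
    by auto
  then show ?thesis
  proof cases
    case 1
    with prod a b have "b = a \<or> a = \<one>"
      using k(2) by (auto simp: inv_iff)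
    with a \<open>a \<noteq> b\<close> show ?thesis
      by simp
  next
    case 2
    with prod b show ?thesis
      by simp
  next
    case 3
    with prod a b z k(1,2) show ?thesis
      by (auto simp: inv_iff)
  qed
qed

lemma involution_not_commute_order_three:
  assumes a: "a \<in> carrier G" "a \<otimes> a = \<one>" "a \<noteq> \<one>" and c: "c \<in> carrier G" "c \<otimes> c \<noteq> \<one>"
  shows "c \<otimes> a \<noteq> a \<otimes> c"
proof
  assume comm: "c \<otimes> a = a \<otimes> c"
  have c3: "c \<otimes> (c \<otimes> c) = \<one>"
    using order_two_or_three c by blast
  have swap: "c \<otimes> (a \<otimes> z) = a \<otimes> (c \<otimes> z)" if "z \<in> carrier G" for z
    using comm a c that by (simp flip: m_assoc)
  have "(c \<otimes> a) \<otimes> (c \<otimes> a) = c \<otimes> c" "(c \<otimes> a) \<otimes> ((c \<otimes> a) \<otimes> (c \<otimes> a)) = a"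
    using a c comm c3 by (simp_all add: m_assoc swap involution_cancel order_three_cancel)
  then show False
    using order_two_or_three[of "c \<otimes> a"] a c by simp
qed

lemma order_three_product_involution:
  assumes c: "c \<in> carrier G" "c \<otimes> c \<noteq> \<one>" and g: "g \<in> carrier G" "g \<otimes> g \<noteq> \<one>"
  shows "(c \<otimes> g) \<otimes> (c \<otimes> g) = \<one> \<or> (c \<otimes> (g \<otimes> g)) \<otimes> (c \<otimes> (g \<otimes> g)) = \<one>"
proof -
  have "c [^] (4::nat) \<noteq> \<one>" "g [^] (4::nat) \<noteq> \<one>"
    using pow4_eq_one_imp_involution c g by auto
  then have "(c \<otimes> g) [^] (4::nat) = \<one> \<or> (c \<otimes> (g \<otimes> g)) [^] (4::nat) = \<one>"
    using did5[unfolded did5_def, rule_format, OF c(1) g(1)] by blast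
  then show ?thesis
    using pow4_eq_one_imp_involution[of "c \<otimes> g"] pow4_eq_one_imp_involution[of "c \<otimes> (g \<otimes> g)"] c g
    by auto
qed

lemma carrier_subset_involution_translates:
  assumes c: "c \<in> carrier G" "c \<otimes> c \<noteq> \<one>"
    and S: "\<And>z. z \<in> carrier G \<Longrightarrow> z \<otimes> z = \<one> \<Longrightarrow> z \<in> S"
  shows "carrier G \<subseteq> S \<union> (\<lambda>t. c \<otimes> (c \<otimes> t)) ` S \<union> (\<lambda>t. (c \<otimes> (c \<otimes> t)) \<otimes> (c \<otimes> (c \<otimes> t))) ` S"
proof
  fix g assume g: "g \<in> carrier G"
  have c3: "c \<otimes> (c \<otimes> c) = \<one>"
    using order_two_or_three c by blast
  show "g \<in> S \<union> (\<lambda>t. c \<otimes> (c \<otimes> t)) ` S \<union> (\<lambda>t. (c \<otimes> (c \<otimes> t)) \<otimes> (c \<otimes> (c \<otimes> t))) ` S"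
  proof (cases "g \<otimes> g = \<one>")
    case True
    with S g show ?thesis
      by blast
  next
    case False
    then have "g \<otimes> (g \<otimes> g) = \<one>"
      using order_two_or_three g by blast
    then have g_eq: "g = (g \<otimes> g) \<otimes> (g \<otimes> g)"
      using g by (simp add: m_assoc)
    from order_three_product_involution[OF c g False] show ?thesis
    proof
      assume "(c \<otimes> g) \<otimes> (c \<otimes> g) = \<one>"
      then have "c \<otimes> g \<in> S"
        using S[OF m_closed[OF c(1) g]] by blast
      moreover have "g = c \<otimes> (c \<otimes> (c \<otimes> g))"
        using order_three_cancel[OF c(1) c3 g] by simp
      ultimately show ?thesis
        by blast
    next
      assume "(c \<otimes> (g \<otimes> g)) \<otimes> (c \<otimes> (g \<otimes> g)) = \<one>"
      then have "c \<otimes> (g \<otimes> g) \<in> S"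
        using S[OF m_closed[OF c(1) m_closed[OF g g]]] by blast
      moreover have "g = (c \<otimes> (c \<otimes> (c \<otimes> (g \<otimes> g)))) \<otimes> (c \<otimes> (c \<otimes> (c \<otimes> (g \<otimes> g))))"
        using order_three_cancel[OF c(1) c3 m_closed[OF g g]] g_eq by simp
      ultimately show ?thesis
        by blast
    qed
  qed
qed

lemma conjugate_by_order_three:
  assumes x: "x \<in> carrier G" "x \<otimes> x = \<one>" "x \<noteq> \<one>" and c: "c \<in> carrier G" "c \<otimes> c \<noteq> \<one>"
  defines "y \<equiv> c \<otimes> (x \<otimes> (c \<otimes> c))"
  shows "y \<in> carrier G" "y \<otimes> y = \<one>" "y \<noteq> \<one>" "y \<noteq> x" "c \<otimes> x = y \<otimes> c"
proof -
  have c3: "c \<otimes> (c \<otimes> c) = \<one>"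
    using order_two_or_three c by blast
  show "y \<in> carrier G" "y \<otimes> y = \<one>" and cx: "c \<otimes> x = y \<otimes> c"
    using x c c3 by (simp_all add: y_def m_assoc involution_cancel order_three_cancel)
  show "y \<noteq> \<one>"
  proof
    assume "y = \<one>"
    with cx have "c \<otimes> x = c \<otimes> \<one>"
      using c by simp
    with x c show False
      by simp
  qed
  show "y \<noteq> x"
    using cx involution_not_commute_order_three[OF x c] by auto
qed

lemma A4_relations_of_conjugate:
  assumes a: "a \<in> carrier G" "a \<otimes> a = \<one>" "a \<noteq> \<one>" and c: "c \<in> carrier G" "c \<otimes> c \<noteq> \<one>"
  defines "b \<equiv> c \<otimes> (a \<otimes> (c \<otimes> c))"
  shows "A4_relations a b c"
proof -
  note b = conjugate_by_order_three[OF a c, folded b_def]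
  define d where "d = c \<otimes> (b \<otimes> (c \<otimes> c))"
  note d = conjugate_by_order_three[OF b(1,2,3) c, folded d_def]
  have c3: "c \<otimes> (c \<otimes> c) = \<one>"
    using order_two_or_three c by blast
  have ab: "b \<otimes> a = a \<otimes> b"
    using involutions_commute a b by blast
  have "d \<noteq> a"
  proof
    assume "d = a"
    then have "c \<otimes> (c \<otimes> b) \<otimes> c = c \<otimes> (a \<otimes> c) \<otimes> c"
      using d(5) c by (simp add: m_assoc)
    moreover have "c \<otimes> (c \<otimes> b) \<otimes> c = a" "c \<otimes> (a \<otimes> c) \<otimes> c = b"
      using a c c3 by (simp_all add: b_def m_assoc order_three_cancel)
    ultimately show False
      using b(4) by simp
  qed
  then have "d = a \<otimes> b"
    using involution_in_klein[OF a b(1,2,3) b(4)[symmetric] d(1,2)] d(3,4) by simp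
  then show ?thesis
    using a c3 b(1,2,5) c(1) d(5) ab by (simp add: A4_relations_def klein_relations_def m_assoc)
qed

lemma iso_to_section_of_A4_if_exponent_two:
  assumes exp2: "\<And>x. x \<in> carrier G \<Longrightarrow> x \<otimes> x = \<one>"
  shows "iso_to_section_of G A4"
proof -
  obtain a b where ab: "a \<in> carrier G" "b \<in> carrier G" and cover: "carrier G \<subseteq> {\<one>, a, b, a \<otimes> b}"
  proof (cases "carrier G \<subseteq> {\<one>}")
    case True
    then show ?thesis
      using that[of \<one> \<one>] by auto
  next
    case False
    then obtain a where a: "a \<in> carrier G" "a \<noteq> \<one>"
      by auto
    show ?thesis
    proof (cases "carrier G \<subseteq> {\<one>, a}")
      case True
      then show ?thesis
        using that[of a \<one>] a by auto
    next
      case False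
      then obtain b where b: "b \<in> carrier G" "b \<noteq> \<one>" "b \<noteq> a"
        by auto
      have "carrier G \<subseteq> {\<one>, a, b, a \<otimes> b}"
        using involution_in_klein[OF a(1) exp2 a(2) b(1) exp2 b(2) b(3)[symmetric]] a b exp2 by blast
      with a b show ?thesis
        using that by blast
    qed
  qed
  have "klein_relations a b"
    using ab exp2 involutions_commute by (simp add: klein_relations_def)
  moreover have "carrier G \<subseteq> generate G {a, b}"
    using cover by (auto intro: generate.intros)
  ultimately show ?thesis
    using iso_to_section_of_A4_if_klein_relations[OF is_group ab] by blast
qed

lemma iso_to_section_of_A4_if_no_involution:
  assumes c: "c \<in> carrier G" "c \<otimes> c \<noteq> \<one>" and no_inv: "\<And>z. z \<in> carrier G \<Longrightarrow> z \<otimes> z = \<one> \<Longrightarrow> z = \<one>"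
  shows "iso_to_section_of G A4"
proof (rule iso_to_section_of_A4_if_A4_relations[OF is_group one_closed one_closed c(1)])
  show "A4_relations \<one> \<one> c"
    using order_two_or_three c by (auto simp: A4_relations_def klein_relations_def)
  have "carrier G \<subseteq> {\<one>} \<union> (\<lambda>t. c \<otimes> (c \<otimes> t)) ` {\<one>} \<union> (\<lambda>t. (c \<otimes> (c \<otimes> t)) \<otimes> (c \<otimes> (c \<otimes> t))) ` {\<one>}"
    using no_inv by (intro carrier_subset_involution_translates[OF c]) blast
  also have "\<dots> \<subseteq> generate G {\<one>, \<one>, c}"
    by (auto intro!: generate.eng intro: generate.incl)
  finally show "carrier G \<subseteq> generate G {\<one>, \<one>, c}" .
qed

lemma iso_to_section_of_A4_if_involution_and_order_three:
  assumes a: "a \<in> carrier G" "a \<otimes> a = \<one>" "a \<noteq> \<one>" and c: "c \<in> carrier G" "c \<otimes> c \<noteq> \<one>"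
  shows "iso_to_section_of G A4"
proof -
  define b where "b = c \<otimes> (a \<otimes> (c \<otimes> c))"
  note b = conjugate_by_order_three[OF a c, folded b_def]
  let ?S = "{\<one>, a, b, a \<otimes> b}"
  have "carrier G \<subseteq> ?S \<union> (\<lambda>t. c \<otimes> (c \<otimes> t)) ` ?S \<union> (\<lambda>t. (c \<otimes> (c \<otimes> t)) \<otimes> (c \<otimes> (c \<otimes> t))) ` ?S"
    using involution_in_klein[OF a b(1,2,3) b(4)[symmetric]]
    by (intro carrier_subset_involution_translates[OF c]) blast
  also have "\<dots> \<subseteq> generate G {a, b, c}"
    by (auto intro!: generate.eng intro: generate.incl generate.one)
  finally show ?thesis
    using iso_to_section_of_A4_if_A4_relations[OF is_group a(1) b(1) c(1)]
      A4_relations_of_conjugate[OF a c] b_def by blast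
qed

theorem iso_to_section_of_A4: "iso_to_section_of G A4"
proof (cases "\<exists>c\<in>carrier G. c \<otimes> c \<noteq> \<one>")
  case True
  then obtain c where c: "c \<in> carrier G" "c \<otimes> c \<noteq> \<one>"
    by blast
  show ?thesis
  proof (cases "\<exists>a\<in>carrier G. a \<otimes> a = \<one> \<and> a \<noteq> \<one>")
    case True
    with c show ?thesis
      using iso_to_section_of_A4_if_involution_and_order_three by blast
  next
    case False
    with c show ?thesis
      using iso_to_section_of_A4_if_no_involution by blast
  qed
next
  case False
  then show ?thesis
    using iso_to_section_of_A4_if_exponent_two by blast
qed

end

theorem proposition3:
  fixes G :: "('a, 'b) monoid_scheme"
  shows "satisfies_A4_basis (alt_group 4)
    \<and> (group G \<and> satisfies_A4_basis G \<longrightarrow> iso_to_section_of G (alt_group 4))"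
proof (intro conjI impI)
  show "satisfies_A4_basis (alt_group 4)"
    unfolding satisfies_A4_basis_def using did1_A4 did2_A4 did3_A4 did4_A4 did5_A4 by blast
next
  assume "group G \<and> satisfies_A4_basis G"
  then have "A4_basis_group G"
    by (simp add: A4_basis_group_def A4_basis_group_axioms_def satisfies_A4_basis_def)
  then show "iso_to_section_of G (alt_group 4)"
    by (rule A4_basis_group.iso_to_section_of_A4)
qed

end
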